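(* Let $(G,*,\le)$ be a totally ordered commutative semigroup, let $n\ge 1$, and let $a_1,a_2,\ldots,a_{2n}\in G$ (not necessarily distinct) with $a_1\le a_2\le\cdots\le a_{2n}$. Let $N\in G$. Suppose there are indices $i_1,j_1,\ldots,i_n,j_n$ with $\{i_1,j_1,\ldots,i_n,j_n\}=\{1,2,\ldots,2n\}$ (so these $2n$ indices are pairwise distinct and each of $1,\ldots,2n$ is used exactly once) such that $$a_{i_k}*a_{j_k}>N\quad\text{for all }k=1,\ldots,n.$$ Then $$a_k*a_{2n+1-k}>N\quad\text{for all }k=1,\ldots,n,$$ i.e. $a_1*a_{2n}>N$, $a_2*a_{2n-1}>N$, $\ldots$, $a_n*a_{n+1}>N$.
   Context: A totally ordered commutative semigroup is a triple $(G,*,\le)$ where $(G,* )$ is a commutative semigroup (an associative, commutative binary operation $*$ on a set $G$) and $\le$ is a total order on $G$ such that for all $\alpha,\beta,\gamma,\delta\in G$: if $\alpha\le\beta$ and $\gamma\le\delta$ then $\alpha*\gamma\le\beta*\delta$. Here $x>y$ means $y\le x$ and $x\ne y$. *)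

theory Defs
  imports Main
begin

definition tocs :: "('a::linorder \<Rightarrow> 'a \<Rightarrow> 'a) \<Rightarrow> bool" where
  "tocs op \<longleftrightarrow>
     (\<forall>x y z. op (op x y) z = op x (op y z)) \<and>
     (\<forall>x y. op x y = op y x) \<and>
     (\<forall>\<alpha> \<beta> \<gamma> \<delta>. \<alpha> \<le> \<beta> \<and> \<gamma> \<le> \<delta> \<longrightarrow> op \<alpha> \<gamma> \<le> op \<beta> \<delta>)"

end

theory Submission
  imports Defs
begin

(* Fix k \<le> n.  Since the 2n indices i_1,j_1,...,i_n,j_n exhaust {1..2n},
   the pairs {i_m, j_m} form a perfect matching of {1..2n}.  A counting argument shows that
   some pair has smaller entry \<le> k and larger entry \<le> 2n+1-k: otherwise the pairs meeting
   {1..k} are at least k in number (each contains exactly one element of {1..k}), while their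
   larger entries are distinct elements of {2n+2-k..2n}, a set with only k-1 elements.
   For such a pair, monotonicity of the sorted sequence and of the operation gives
   N < a_{i_m} * a_{j_m} \<le> a_k * a_{2n+1-k}. *)

lemma tocs_commute: "tocs op \<Longrightarrow> op x y = op y x"
  unfolding tocs_def by blast

lemma tocs_mono: "tocs op \<Longrightarrow> x \<le> y \<Longrightarrow> z \<le> w \<Longrightarrow> op x z \<le> op y w"
  unfolding tocs_def by blast

lemma tocs_min_max: "tocs op \<Longrightarrow> op (a (min x y)) (a (max x y)) = op (a x) (a y)"
  by (cases "x \<le> y") (auto simp: min_def max_def intro: tocs_commute)

lemma covering_is_matching:
  assumes fin: "finite I"
    and cover: "i ` I \<union> j ` I = S" and card_S: "card S = 2 * card I"
  shows "inj_on i I" "inj_on j I" "i ` I \<inter> j ` I = {}"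
proof -
  have "card (i ` I) + card (j ` I) = card S + card (i ` I \<inter> j ` I)"
    using card_Un_Int[of "i ` I" "j ` I"] fin cover by simp
  moreover have "card (i ` I) \<le> card I" "card (j ` I) \<le> card I"
    by (rule card_image_le[OF fin])+
  ultimately have ci: "card (i ` I) = card I" and cj: "card (j ` I) = card I"
    and "card (i ` I \<inter> j ` I) = 0"
    using card_S by linarith+
  then show "i ` I \<inter> j ` I = {}" using fin by simp
  show "inj_on i I" by (rule eq_card_imp_inj_on[OF fin ci])
  show "inj_on j I" by (rule eq_card_imp_inj_on[OF fin cj])
qed

lemma matching_shared_index:
  assumes "inj_on i I" "inj_on j I" "i ` I \<inter> j ` I = {}"
    and "m1 \<in> I" "m2 \<in> I" "x \<in> {i m1, j m1}" "x \<in> {i m2, j m2}"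
  shows "m1 = m2"
  using assms by (auto dest: inj_onD)

lemma matching_small_pair:
  fixes i j :: "'b \<Rightarrow> nat"
  assumes fin: "finite I"
    and inj_i: "inj_on i I" and inj_j: "inj_on j I" and disj: "i ` I \<inter> j ` I = {}"
    and cover: "i ` I \<union> j ` I = {1..2 * n}"
    and k: "1 \<le> k" "k \<le> n"
  shows "\<exists>m \<in> I. min (i m) (j m) \<le> k \<and> max (i m) (j m) \<le> 2 * n + 1 - k"
proof (rule ccontr)
  define lo where "lo m = min (i m) (j m)" for m
  define hi where "hi m = max (i m) (j m)" for m
  have hi_in_pair: "hi m \<in> {i m, j m}" for m by (simp add: hi_def max_def)
  assume "\<not> ?thesis"
  then have big_hi: "2 * n + 1 - k < hi m" if "m \<in> I" "lo m \<le> k" for m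
    using that unfolding lo_def hi_def by (meson not_le)
  define X where "X = {m \<in> I. lo m \<le> k}"
  have fin_X: "finite X" using fin by (simp add: X_def)
  text \<open>Each element of {1..k} is the smaller entry of its pair, whose larger entry exceeds k.\<close>
  have "{1..k} \<subseteq> lo ` X"
  proof
    fix p assume p: "p \<in> {1..k}"
    then have "p \<in> i ` I \<union> j ` I" using cover k by auto
    then obtain m where m: "m \<in> I" "p = i m \<or> p = j m" by blast
    then have "lo m \<le> p" by (auto simp: lo_def)
    then have lo_m: "lo m \<le> k" using p by simp
    then have "k < hi m" using big_hi[OF m(1)] k by linarith
    then have "p = lo m" using m(2) p unfolding lo_def hi_def by (auto simp: min_def max_def)
    with m(1) lo_m show "p \<in> lo ` X" by (auto simp: X_def)
  qed
  then have "card {1..k} \<le> card (lo ` X)" by (intro card_mono finite_imageI fin_X)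
  also have "\<dots> \<le> card X" by (rule card_image_le[OF fin_X])
  finally have "k \<le> card X" by simp
  have "inj_on hi X"
  proof
    fix m1 m2 assume "m1 \<in> X" "m2 \<in> X" and eq: "hi m1 = hi m2"
    then have "m1 \<in> I" "m2 \<in> I" by (auto simp: X_def)
    moreover have "hi m1 \<in> {i m2, j m2}" using hi_in_pair[of m2] eq by simp
    ultimately show "m1 = m2"
      by (rule matching_shared_index[OF inj_i inj_j disj _ _ hi_in_pair])
  qed
  moreover have "hi ` X \<subseteq> {2 * n + 2 - k..2 * n}"
  proof
    fix q assume "q \<in> hi ` X"
    then obtain m where m: "m \<in> I" "lo m \<le> k" "q = hi m" by (auto simp: X_def)
    have "i m \<le> 2 * n" "j m \<le> 2 * n" using cover m(1) by auto
    then show "q \<in> {2 * n + 2 - k..2 * n}"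
      using big_hi[OF m(1,2)] m(3) unfolding hi_def by auto
  qed
  ultimately have "card X \<le> card {2 * n + 2 - k..2 * n}"
    by (intro card_inj_on_le) auto
  also have "\<dots> = k - 1" using k by simp
  finally show False using \<open>k \<le> card X\<close> k by linarith
qed

theorem theorem2p5:
  fixes op :: "'a::linorder \<Rightarrow> 'a \<Rightarrow> 'a"
    and n :: nat and a :: "nat \<Rightarrow> 'a" and N :: 'a
    and i j :: "nat \<Rightarrow> nat"
  assumes "tocs op"
    and "n \<ge> 1"
    and "\<And>k l. 1 \<le> k \<Longrightarrow> k \<le> l \<Longrightarrow> l \<le> 2 * n \<Longrightarrow> a k \<le> a l"
    and "i ` {1..n} \<union> j ` {1..n} = {1..2 * n}"
    and "\<And>k. 1 \<le> k \<Longrightarrow> k \<le> n \<Longrightarrow> op (a (i k)) (a (j k)) > N"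
  shows "\<forall>k \<in> {1..n}. op (a k) (a (2 * n + 1 - k)) > N"
proof
  fix k assume k: "k \<in> {1..n}"
  note matching = covering_is_matching[OF _ assms(4)]
  have "\<exists>m \<in> {1..n}. min (i m) (j m) \<le> k \<and> max (i m) (j m) \<le> 2 * n + 1 - k"
    using k by (intro matching_small_pair[OF _ matching assms(4)]) auto
  then obtain m where m: "m \<in> {1..n}"
    and small: "min (i m) (j m) \<le> k" "max (i m) (j m) \<le> 2 * n + 1 - k"
    by blast
  have range: "1 \<le> i m" "1 \<le> j m" using assms(4) m by auto
  have "N < op (a (i m)) (a (j m))" using assms(5) m by auto
  also have "\<dots> = op (a (min (i m) (j m))) (a (max (i m) (j m)))"
    using tocs_min_max[OF assms(1)] by metis
  also have "\<dots> \<le> op (a k) (a (2 * n + 1 - k))"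
    using small range k by (intro tocs_mono[OF assms(1)] assms(3)) auto
  finally show "op (a k) (a (2 * n + 1 - k)) > N" .
qed

end
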